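(* Let $\mathbf{L}=(L,\le)$ be a finite nontrivial join-semilattice with greatest element $1$ and let $(R,\vee,\circ)$ be a subsemiring of $(\mathrm{JM}(\mathbf{L}),\vee,\circ)$ such that (i) $k_a\in R$ for every $a\in L$; (ii) for every $f\in R$ there exists $a\in L$ with $k_a\le f$ (pointwise); (iii) for all $a\in L$ and all $b\in L\setminus\{1\}$ there exists $f\in R$ with $f(x)=b$ whenever $x\le a$ and $f(x)>b$ otherwise. Then $(R,\vee,\circ)$ is a finite simple additively idempotent semiring whose greatest element is left but not right absorbing. Conversely, every finite simple additively idempotent semiring $(S,+,\cdot)$ with $|S|>2$ whose greatest element is left but not right absorbing is isomorphic to such a semiring $(R,\vee,\circ)$ for some such semilattice $\mathbf{L}$.
   Context: A semiring is a nonempty set with a commutative semigroup operation $+$ and a semigroup operation $\cdot$ satisfying both distributive laws. It is simple if its only congruences are the identity and the full relation; additively idempotent if $r+r=r$; then $x\le y:\Leftrightarrow x+y=y$ is a partial order, and for finite semirings the greatest element is the sum of all elements. An element $r$ is right absorbing if $sr=r$ for all $s$, left absorbing if $rs=r$ for all $s$. For a finite join-semilattice $\mathbf{L}$, $\mathrm{JM}(\mathbf{L})$ is the set of maps $f:L\to L$ with $f(x\vee y)=f(x)\vee f(y)$, a semiring under pointwise join and composition. For $a\in L$, $k_a$ is the constant map with value $a$. *)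

theory Defs
  imports "HOL-Library.FuncSet"
begin

definition semiring_on :: "'a set \<Rightarrow> ('a \<Rightarrow> 'a \<Rightarrow> 'a) \<Rightarrow> ('a \<Rightarrow> 'a \<Rightarrow> 'a) \<Rightarrow> bool" where
  "semiring_on S add mul \<longleftrightarrow> S \<noteq> {}
     \<and> (\<forall>x\<in>S. \<forall>y\<in>S. add x y \<in> S \<and> mul x y \<in> S)
     \<and> (\<forall>x\<in>S. \<forall>y\<in>S. \<forall>z\<in>S. add (add x y) z = add x (add y z))
     \<and> (\<forall>x\<in>S. \<forall>y\<in>S. add x y = add y x)
     \<and> (\<forall>x\<in>S. \<forall>y\<in>S. \<forall>z\<in>S. mul (mul x y) z = mul x (mul y z))
     \<and> (\<forall>x\<in>S. \<forall>y\<in>S. \<forall>z\<in>S. mul x (add y z) = add (mul x y) (mul x z))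
     \<and> (\<forall>x\<in>S. \<forall>y\<in>S. \<forall>z\<in>S. mul (add x y) z = add (mul x z) (mul y z))"

definition semiring_congruence :: "'a set \<Rightarrow> ('a \<Rightarrow> 'a \<Rightarrow> 'a) \<Rightarrow> ('a \<Rightarrow> 'a \<Rightarrow> 'a) \<Rightarrow> ('a \<times> 'a) set \<Rightarrow> bool" where
  "semiring_congruence S add mul \<rho> \<longleftrightarrow> equiv S \<rho>
     \<and> (\<forall>x y u v. (x, y) \<in> \<rho> \<longrightarrow> (u, v) \<in> \<rho> \<longrightarrow>
           (add x u, add y v) \<in> \<rho> \<and> (mul x u, mul y v) \<in> \<rho>)"

definition simple_semiring :: "'a set \<Rightarrow> ('a \<Rightarrow> 'a \<Rightarrow> 'a) \<Rightarrow> ('a \<Rightarrow> 'a \<Rightarrow> 'a) \<Rightarrow> bool" where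
  "simple_semiring S add mul \<longleftrightarrow> semiring_on S add mul
     \<and> (\<forall>\<rho>. semiring_congruence S add mul \<rho> \<longrightarrow> \<rho> = Id_on S \<or> \<rho> = S \<times> S)"

definition add_idempotent :: "'a set \<Rightarrow> ('a \<Rightarrow> 'a \<Rightarrow> 'a) \<Rightarrow> bool" where
  "add_idempotent S add \<longleftrightarrow> (\<forall>x\<in>S. add x x = x)"

text \<open>Greatest element w.r.t. x \<le> y iff x + y = y.\<close>
definition greatest_elem :: "'a set \<Rightarrow> ('a \<Rightarrow> 'a \<Rightarrow> 'a) \<Rightarrow> 'a \<Rightarrow> bool" where
  "greatest_elem S add g \<longleftrightarrow> g \<in> S \<and> (\<forall>x\<in>S. add x g = g)"

definition left_absorbing :: "'a set \<Rightarrow> ('a \<Rightarrow> 'a \<Rightarrow> 'a) \<Rightarrow> 'a \<Rightarrow> bool" where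
  "left_absorbing S mul r \<longleftrightarrow> (\<forall>s\<in>S. mul r s = r)"

definition right_absorbing :: "'a set \<Rightarrow> ('a \<Rightarrow> 'a \<Rightarrow> 'a) \<Rightarrow> 'a \<Rightarrow> bool" where
  "right_absorbing S mul r \<longleftrightarrow> (\<forall>s\<in>S. mul s r = r)"

definition is_lub :: "'b set \<Rightarrow> ('b \<Rightarrow> 'b \<Rightarrow> bool) \<Rightarrow> 'b \<Rightarrow> 'b \<Rightarrow> 'b \<Rightarrow> bool" where
  "is_lub L le x y z \<longleftrightarrow> z \<in> L \<and> le x z \<and> le y z \<and> (\<forall>w\<in>L. le x w \<and> le y w \<longrightarrow> le z w)"

definition join_semilattice :: "'b set \<Rightarrow> ('b \<Rightarrow> 'b \<Rightarrow> bool) \<Rightarrow> bool" where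
  "join_semilattice L le \<longleftrightarrow>
     (\<forall>x\<in>L. le x x)
     \<and> (\<forall>x\<in>L. \<forall>y\<in>L. le x y \<and> le y x \<longrightarrow> x = y)
     \<and> (\<forall>x\<in>L. \<forall>y\<in>L. \<forall>z\<in>L. le x y \<and> le y z \<longrightarrow> le x z)
     \<and> (\<forall>x\<in>L. \<forall>y\<in>L. \<exists>z. is_lub L le x y z)"

definition sl_join :: "'b set \<Rightarrow> ('b \<Rightarrow> 'b \<Rightarrow> bool) \<Rightarrow> 'b \<Rightarrow> 'b \<Rightarrow> 'b" where
  "sl_join L le x y = (THE z. is_lub L le x y z)"

definition JM :: "'b set \<Rightarrow> ('b \<Rightarrow> 'b \<Rightarrow> bool) \<Rightarrow> ('b \<Rightarrow> 'b) set" where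
  "JM L le = {f \<in> L \<rightarrow>\<^sub>E L. \<forall>x\<in>L. \<forall>y\<in>L. f (sl_join L le x y) = sl_join L le (f x) (f y)}"

text \<open>Pointwise join of maps; multiplication is composition  compose L f g = (\<lambda>x\<in>L. f (g x)).\<close>
definition jm_join :: "'b set \<Rightarrow> ('b \<Rightarrow> 'b \<Rightarrow> bool) \<Rightarrow> ('b \<Rightarrow> 'b) \<Rightarrow> ('b \<Rightarrow> 'b) \<Rightarrow> ('b \<Rightarrow> 'b)" where
  "jm_join L le f g = (\<lambda>x\<in>L. sl_join L le (f x) (g x))"

definition const_map :: "'b set \<Rightarrow> 'b \<Rightarrow> ('b \<Rightarrow> 'b)" where
  "const_map L a = (\<lambda>x\<in>L. a)"

definition subsemiring_JM :: "'b set \<Rightarrow> ('b \<Rightarrow> 'b \<Rightarrow> bool) \<Rightarrow> ('b \<Rightarrow> 'b) set \<Rightarrow> bool" where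
  "subsemiring_JM L le R \<longleftrightarrow> R \<noteq> {} \<and> R \<subseteq> JM L le
     \<and> (\<forall>f\<in>R. \<forall>g\<in>R. jm_join L le f g \<in> R \<and> compose L f g \<in> R)"

definition admissible :: "'b set \<Rightarrow> ('b \<Rightarrow> 'b \<Rightarrow> bool) \<Rightarrow> 'b \<Rightarrow> ('b \<Rightarrow> 'b) set \<Rightarrow> bool" where
  "admissible L le one R \<longleftrightarrow>
     join_semilattice L le \<and> finite L \<and> card L \<ge> 2
     \<and> one \<in> L \<and> (\<forall>x\<in>L. le x one)
     \<and> subsemiring_JM L le R
     \<and> (\<forall>a\<in>L. const_map L a \<in> R)
     \<and> (\<forall>f\<in>R. \<exists>a\<in>L. \<forall>x\<in>L. le a (f x))
     \<and> (\<forall>a\<in>L. \<forall>b\<in>L - {one}. \<exists>f\<in>R. \<forall>x\<in>L.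
          (le x a \<longrightarrow> f x = b) \<and> (\<not> le x a \<longrightarrow> le b (f x) \<and> f x \<noteq> b))"

end

theory Submission
  imports Defs
begin

text \<open>
  Forward direction: \<open>R\<close> is a finite additively idempotent semiring whose greatest element \<open>k\<^sub>1\<close>
  is left absorbing but not right absorbing, as \<open>k\<^sub>a \<circ> k\<^sub>1 = k\<^sub>a\<close>. A congruence identifying two
  distinct maps identifies, after composing with constants, two constants \<open>k\<^sub>u\<close>, \<open>k\<^sub>v\<close> with \<open>u < v\<close>;
  composing with the maps of (iii) pushes the class of every \<open>k\<^sub>c\<close>, \<open>c \<noteq> 1\<close>, strictly upwards, so all
  constants are congruent to \<open>k\<^sub>1\<close>, and by (ii) every \<open>f = f \<or> k\<^sub>a\<close> is congruent to \<open>f \<or> k\<^sub>1 = k\<^sub>1\<close>.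

  Converse: the left ideal \<open>S g\<close> of the greatest element \<open>g\<close> consists of left absorbing elements and
  is a join-semilattice for the additive order, with top \<open>g\<close>. \<open>S\<close> acts on it by left
  multiplication through join-morphisms, and the elements of \<open>S g\<close> act as constants. Simplicity,
  applied to suitable congruences, shows that the action is faithful, that every element acts above
  some constant, and that for \<open>b \<noteq> g\<close> the conditions \<open>u s y \<le> b\<close> separate the elements of \<open>S\<close>; the
  maps required by (iii) are then finite sums.
\<close>

section \<open>Join-morphism semirings of finite join-semilattices\<close>

lemma sl_join_eqI:
  assumes "join_semilattice L le" and "is_lub L le x y z"
  shows "sl_join L le x y = z"
  unfolding sl_join_def
proof (rule the_equality)
  show "is_lub L le x y z" by fact
  fix z' assume z': "is_lub L le x y z'"
  have "z \<in> L" "z' \<in> L" "le z z'" "le z' z"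
    using assms(2) z' unfolding is_lub_def by auto
  with assms(1) show "z' = z" unfolding join_semilattice_def by blast
qed

lemma const_map_apply [simp]: "x \<in> L \<Longrightarrow> const_map L a x = a"
  by (simp add: const_map_def)

lemma jm_join_apply [simp]: "x \<in> L \<Longrightarrow> jm_join L le f g x = sl_join L le (f x) (g x)"
  by (simp add: jm_join_def)

lemma compose_const_map: "a \<in> L \<Longrightarrow> compose L f (const_map L a) = const_map L (f a)"
  by (rule extensionalityI[OF compose_extensional]) (auto simp: compose_eq const_map_def)

lemma JM_PiE: "f \<in> JM L le \<Longrightarrow> f \<in> L \<rightarrow>\<^sub>E L"
  by (simp add: JM_def)

lemma JM_join_hom: "f \<in> JM L le \<Longrightarrow> x \<in> L \<Longrightarrow> y \<in> L \<Longrightarrow> f (sl_join L le x y) = sl_join L le (f x) (f y)"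
  by (simp add: JM_def)

lemma finite_JM: "finite L \<Longrightarrow> finite (JM L le)"
  by (rule finite_subset[of _ "L \<rightarrow>\<^sub>E L"]) (auto simp: JM_def intro: finite_PiE)

locale jslattice =
  fixes L :: "'b set" and le :: "'b \<Rightarrow> 'b \<Rightarrow> bool"
  assumes join_semilattice: "join_semilattice L le"
begin

abbreviation join :: "'b \<Rightarrow> 'b \<Rightarrow> 'b" where "join \<equiv> sl_join L le"

lemma refl_le: "x \<in> L \<Longrightarrow> le x x"
  using join_semilattice unfolding join_semilattice_def by simp

lemma antisym_le: "x \<in> L \<Longrightarrow> y \<in> L \<Longrightarrow> le x y \<Longrightarrow> le y x \<Longrightarrow> x = y"
  using join_semilattice unfolding join_semilattice_def by (elim conjE) blast

lemma trans_le: "x \<in> L \<Longrightarrow> y \<in> L \<Longrightarrow> z \<in> L \<Longrightarrow> le x y \<Longrightarrow> le y z \<Longrightarrow> le x z"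
  using join_semilattice unfolding join_semilattice_def by (elim conjE) blast

lemma lub_exists: "x \<in> L \<Longrightarrow> y \<in> L \<Longrightarrow> \<exists>z. is_lub L le x y z"
  using join_semilattice unfolding join_semilattice_def by (elim conjE) blast

lemma join_is_lub: "x \<in> L \<Longrightarrow> y \<in> L \<Longrightarrow> is_lub L le x y (join x y)"
  using lub_exists sl_join_eqI[OF join_semilattice] by metis

lemma join_closed: "x \<in> L \<Longrightarrow> y \<in> L \<Longrightarrow> join x y \<in> L"
  and join_upper1: "x \<in> L \<Longrightarrow> y \<in> L \<Longrightarrow> le x (join x y)"
  and join_upper2: "x \<in> L \<Longrightarrow> y \<in> L \<Longrightarrow> le y (join x y)"
  and join_least: "x \<in> L \<Longrightarrow> y \<in> L \<Longrightarrow> w \<in> L \<Longrightarrow> le x w \<Longrightarrow> le y w \<Longrightarrow> le (join x y) w"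
  using join_is_lub unfolding is_lub_def by blast+

lemma join_absorb2: "x \<in> L \<Longrightarrow> y \<in> L \<Longrightarrow> le x y \<Longrightarrow> join x y = y"
  by (rule sl_join_eqI[OF join_semilattice]) (auto simp: is_lub_def refl_le)

lemma join_absorb1: "x \<in> L \<Longrightarrow> y \<in> L \<Longrightarrow> le y x \<Longrightarrow> join x y = x"
  by (rule sl_join_eqI[OF join_semilattice]) (auto simp: is_lub_def refl_le)

lemma join_idem: "x \<in> L \<Longrightarrow> join x x = x"
  by (simp add: join_absorb2 refl_le)

lemma join_comm: "x \<in> L \<Longrightarrow> y \<in> L \<Longrightarrow> join x y = join y x"
  by (rule sl_join_eqI[OF join_semilattice]) (auto simp: is_lub_def join_closed join_upper1 join_upper2 join_least)

lemma join_assoc: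
  assumes x: "x \<in> L" and y: "y \<in> L" and z: "z \<in> L"
  shows "join (join x y) z = join x (join y z)"
proof (rule sl_join_eqI[OF join_semilattice])
  let ?m = "join x (join y z)"
  have yz: "join y z \<in> L" and m: "?m \<in> L"
    using x y z by (simp_all add: join_closed)
  have xm: "le x ?m" and yzm: "le (join y z) ?m"
    using x yz by (simp_all add: join_upper1 join_upper2)
  have ym: "le y ?m"
    by (rule trans_le[OF y yz m join_upper1[OF y z] yzm])
  have zm: "le z ?m"
    by (rule trans_le[OF z yz m join_upper2[OF y z] yzm])
  show "is_lub L le (join x y) z ?m"
    unfolding is_lub_def
  proof (intro conjI ballI impI)
    show "?m \<in> L" "le z ?m" by (fact m, fact zm)
    show "le (join x y) ?m" by (rule join_least[OF x y m xm ym])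
    fix w assume w: "w \<in> L" "le (join x y) w \<and> le z w"
    have xy: "join x y \<in> L" using x y by (rule join_closed)
    have "le x w" by (rule trans_le[OF x xy w(1) join_upper1[OF x y]]) (use w in simp)
    moreover have "le y w" by (rule trans_le[OF y xy w(1) join_upper2[OF x y]]) (use w in simp)
    ultimately show "le ?m w"
      using w by (simp add: join_least x y z yz)
  qed
qed

lemma subsemiring_JM_semiring_on:
  assumes "subsemiring_JM L le R"
  shows "semiring_on R (jm_join L le) (compose L)"
proof -
  have R: "R \<noteq> {}" "\<And>f. f \<in> R \<Longrightarrow> f \<in> JM L le"
    "\<And>f g. f \<in> R \<Longrightarrow> g \<in> R \<Longrightarrow> jm_join L le f g \<in> R \<and> compose L f g \<in> R"
    using assms unfolding subsemiring_JM_def by auto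
  have app: "f \<in> R \<Longrightarrow> x \<in> L \<Longrightarrow> f x \<in> L" for f x
    using R(2) JM_PiE PiE_mem by metis
  have ext: "jm_join L le f g \<in> extensional L" for f g
    by (simp add: jm_join_def)
  show ?thesis
    unfolding semiring_on_def
  proof (intro conjI ballI R(1))
    fix f g h assume fgh: "f \<in> R" "g \<in> R" "h \<in> R"
    show "jm_join L le (jm_join L le f g) h = jm_join L le f (jm_join L le g h)"
      by (rule extensionalityI[OF ext ext]) (simp add: join_assoc app fgh)
    show "compose L (compose L f g) h = compose L f (compose L g h)"
      by (rule extensionalityI[OF compose_extensional compose_extensional]) (simp add: compose_eq app fgh)
    show "compose L f (jm_join L le g h) = jm_join L le (compose L f g) (compose L f h)"
      by (rule extensionalityI[OF compose_extensional ext]) (simp add: compose_eq app JM_join_hom R(2) fgh)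
    show "compose L (jm_join L le f g) h = jm_join L le (compose L f h) (compose L g h)"
      by (rule extensionalityI[OF compose_extensional ext]) (simp add: compose_eq app fgh)
  next
    fix f g assume fg: "f \<in> R" "g \<in> R"
    then show "jm_join L le f g \<in> R" "compose L f g \<in> R" using R(3) by auto
    show "jm_join L le f g = jm_join L le g f"
      by (rule extensionalityI[OF ext ext]) (simp add: join_comm app fg)
  qed
qed

lemma JM_add_idempotent: "R \<subseteq> JM L le \<Longrightarrow> add_idempotent R (jm_join L le)"
  unfolding add_idempotent_def
proof
  fix f assume "R \<subseteq> JM L le" "f \<in> R"
  then have f: "f \<in> L \<rightarrow>\<^sub>E L" by (intro JM_PiE) blast
  show "jm_join L le f f = f"
  proof (rule extensionalityI[of _ L])
    show "jm_join L le f f \<in> extensional L" by (simp add: jm_join_def)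
    show "f \<in> extensional L" using f by (simp add: PiE_def)
    fix x assume "x \<in> L"
    then show "jm_join L le f f x = f x" using PiE_mem[OF f] by (simp add: join_idem)
  qed
qed

lemma finite_upward_induct [consumes 2, case_names step]:
  assumes "finite L" "c \<in> L"
    and step: "\<And>c. c \<in> L \<Longrightarrow> (\<And>d. d \<in> L \<Longrightarrow> le c d \<Longrightarrow> d \<noteq> c \<Longrightarrow> P d) \<Longrightarrow> P c"
  shows "P c"
  using assms(2)
proof (induction c rule: measure_induct_rule[where f = "\<lambda>c. card {e \<in> L. le c e}"])
  case (less c)
  show ?case
  proof (rule step[OF less.prems])
    fix d assume d: "d \<in> L" "le c d" "d \<noteq> c"
    have "{e \<in> L. le d e} \<subseteq> {e \<in> L. le c e}"
      using trans_le[OF less.prems d(1)] d(2) by blast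
    moreover have "c \<in> {e \<in> L. le c e} - {e \<in> L. le d e}"
      using less.prems d antisym_le refl_le by auto
    ultimately have "card {e \<in> L. le d e} < card {e \<in> L. le c e}"
      using \<open>finite L\<close> by (intro psubset_card_mono) auto
    then show "P d" using less.IH d(1) by blast
  qed
qed

end

section \<open>The semirings of the theorem are simple\<close>

locale admissible_JM =
  fixes L :: "'b set" and le one R
  assumes admissible: "admissible L le one R"

sublocale admissible_JM \<subseteq> jslattice
  using admissible by unfold_locales (simp add: admissible_def)

context admissible_JM
begin

lemma finite_L: "finite L"
  using admissible by (simp add: admissible_def)

lemma card_L: "2 \<le> card L"
  using admissible by (simp add: admissible_def)

lemma one_in_L: "one \<in> L"
  using admissible by (simp add: admissible_def)

lemma le_one: "x \<in> L \<Longrightarrow> le x one"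
  using admissible by (simp add: admissible_def)

lemma subsemiring: "subsemiring_JM L le R"
  using admissible by (simp add: admissible_def)

lemma const_map_in_R: "a \<in> L \<Longrightarrow> const_map L a \<in> R"
  using admissible by (simp add: admissible_def)

lemma R_lower_bound: "f \<in> R \<Longrightarrow> \<exists>a\<in>L. \<forall>x\<in>L. le a (f x)"
  using admissible by (simp add: admissible_def)

lemma R_separating: "a \<in> L \<Longrightarrow> b \<in> L \<Longrightarrow> b \<noteq> one \<Longrightarrow>
    \<exists>f\<in>R. \<forall>x\<in>L. (le x a \<longrightarrow> f x = b) \<and> (\<not> le x a \<longrightarrow> le b (f x) \<and> f x \<noteq> b)"
  using admissible by (simp add: admissible_def)

lemma R_subset_JM: "R \<subseteq> JM L le"
  using subsemiring unfolding subsemiring_JM_def by blast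

lemma R_PiE: "f \<in> R \<Longrightarrow> f \<in> L \<rightarrow>\<^sub>E L"
  using R_subset_JM JM_PiE by blast

lemma R_extensional: "f \<in> R \<Longrightarrow> f \<in> extensional L"
  using R_PiE by (simp add: PiE_def)

lemma R_apply_closed: "f \<in> R \<Longrightarrow> x \<in> L \<Longrightarrow> f x \<in> L"
  using R_PiE PiE_mem by blast

lemma semiring_on_R: "semiring_on R (jm_join L le) (compose L)"
  by (rule subsemiring_JM_semiring_on[OF subsemiring])

lemma add_idempotent_R: "add_idempotent R (jm_join L le)"
  by (rule JM_add_idempotent[OF R_subset_JM])

lemma finite_R: "finite R"
  using finite_subset[OF R_subset_JM finite_JM[OF finite_L]] .

lemma jm_join_const_map:
  "a \<in> L \<Longrightarrow> b \<in> L \<Longrightarrow> jm_join L le (const_map L a) (const_map L b) = const_map L (join a b)"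
  by (rule extensionalityI[of _ L]) (auto simp: jm_join_def const_map_def)

lemma jm_join_lower_const_map:
  assumes "f \<in> R" "a \<in> L" "\<forall>x\<in>L. le a (f x)"
  shows "jm_join L le f (const_map L a) = f"
  by (rule extensionalityI[of _ L]) (use assms in \<open>auto simp: jm_join_def join_absorb1 R_apply_closed R_extensional\<close>)

lemma jm_join_top:
  assumes "f \<in> R"
  shows "jm_join L le f (const_map L one) = const_map L one"
  by (rule extensionalityI[of _ L])
    (use assms in \<open>auto simp: jm_join_def const_map_def join_absorb2 R_apply_closed one_in_L le_one\<close>)

lemma greatest_elem_top: "greatest_elem R (jm_join L le) (const_map L one)"
  unfolding greatest_elem_def using const_map_in_R[OF one_in_L] jm_join_top by blast

lemma left_absorbing_top: "left_absorbing R (compose L) (const_map L one)"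
  unfolding left_absorbing_def
  by (intro ballI extensionalityI[OF compose_extensional]) (auto simp: compose_eq const_map_def R_apply_closed)

lemma not_right_absorbing_top: "\<not> right_absorbing R (compose L) (const_map L one)"
proof -
  have "\<not> L \<subseteq> {one}"
    using card_mono[of "{one}" L] card_L by auto
  then obtain a where a: "a \<in> L" "a \<noteq> one"
    by blast
  have "compose L (const_map L a) (const_map L one) = const_map L a"
    using compose_const_map[OF one_in_L] a one_in_L by simp
  moreover have "const_map L a \<noteq> const_map L one"
    using a one_in_L by (metis const_map_apply)
  ultimately show ?thesis
    unfolding right_absorbing_def using const_map_in_R[OF a(1)] by metis
qed

context
  fixes \<rho>
  assumes congruence: "semiring_congruence R (jm_join L le) (compose L) \<rho>"
begin

lemma cong_equiv: "equiv R \<rho>"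
  using congruence by (simp add: semiring_congruence_def)

lemma cong_subset: "\<rho> \<subseteq> R \<times> R"
  using equiv_type[OF cong_equiv] .

lemma cong_refl: "f \<in> R \<Longrightarrow> (f, f) \<in> \<rho>"
  using cong_equiv by (metis equivE refl_onD)

lemma cong_sym: "(f, g) \<in> \<rho> \<Longrightarrow> (g, f) \<in> \<rho>"
  using cong_equiv by (metis equivE symD)

lemma cong_trans: "(f, g) \<in> \<rho> \<Longrightarrow> (g, h) \<in> \<rho> \<Longrightarrow> (f, h) \<in> \<rho>"
  using cong_equiv by (metis equivE transD)

lemma cong_jm_join: "(f, g) \<in> \<rho> \<Longrightarrow> (h, k) \<in> \<rho> \<Longrightarrow> (jm_join L le f h, jm_join L le g k) \<in> \<rho>"
  and cong_compose: "(f, g) \<in> \<rho> \<Longrightarrow> (h, k) \<in> \<rho> \<Longrightarrow> (compose L f h, compose L g k) \<in> \<rho>"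
  using congruence unfolding semiring_congruence_def by metis+

lemma cong_const_maps:
  assumes "(f, g) \<in> \<rho>" "x \<in> L"
  shows "(const_map L (f x), const_map L (g x)) \<in> \<rho>"
  using cong_compose[OF assms(1) cong_refl[OF const_map_in_R[OF assms(2)]]]
  by (simp add: compose_const_map assms(2))

lemma cong_const_map_join:
  assumes "u \<in> L" "v \<in> L" "(const_map L u, const_map L v) \<in> \<rho>"
  shows "(const_map L u, const_map L (join u v)) \<in> \<rho>"
  using cong_jm_join[OF cong_refl[OF const_map_in_R[OF assms(1)]] assms(3)]
  by (simp add: jm_join_const_map assms join_absorb2 refl_le)

lemma cong_strict_const_maps:
  assumes "\<rho> \<noteq> Id_on R"
  obtains u v where "u \<in> L" "v \<in> L" "le u v" "u \<noteq> v" "(const_map L u, const_map L v) \<in> \<rho>"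
proof -
  have "Id_on R \<subseteq> \<rho>"
    using cong_refl by auto
  with assms obtain f g where fg: "(f, g) \<in> \<rho>" "(f, g) \<notin> Id_on R"
    by auto
  have fR: "f \<in> R" and gR: "g \<in> R"
    using fg(1) cong_subset by auto
  then have "f \<noteq> g"
    using fg(2) by auto
  then obtain x where x: "x \<in> L" "f x \<noteq> g x"
    using extensionalityI[OF R_extensional[OF fR] R_extensional[OF gR]] by blast
  let ?u = "f x" and ?v = "g x"
  have uv: "?u \<in> L" "?v \<in> L" "(const_map L ?u, const_map L ?v) \<in> \<rho>"
    using R_apply_closed[OF fR x(1)] R_apply_closed[OF gR x(1)] cong_const_maps[OF fg(1) x(1)] by auto
  let ?w = "join ?u ?v"
  have w: "?w \<in> L" "le ?u ?w" "le ?v ?w"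
    using uv(1,2) by (simp_all add: join_closed join_upper1 join_upper2)
  have "(const_map L ?u, const_map L ?w) \<in> \<rho>"
    using cong_const_map_join[OF uv] .
  moreover have "(const_map L ?v, const_map L ?w) \<in> \<rho>"
    using cong_const_map_join[OF uv(2,1) cong_sym[OF uv(3)]] join_comm[OF uv(1,2)] by simp
  moreover have "?u \<noteq> ?w \<or> ?v \<noteq> ?w"
    using x(2) by auto
  ultimately show ?thesis
    using that[OF uv(1) w(1,2)] that[OF uv(2) w(1,3)] by blast
qed

lemma cong_raise_const_map:
  assumes "u \<in> L" "v \<in> L" "le u v" "u \<noteq> v" "(const_map L u, const_map L v) \<in> \<rho>"
    and "c \<in> L" "c \<noteq> one"
  shows "\<exists>d\<in>L. le c d \<and> d \<noteq> c \<and> (const_map L c, const_map L d) \<in> \<rho>"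
proof -
  obtain f where f: "f \<in> R" "\<forall>x\<in>L. (le x u \<longrightarrow> f x = c) \<and> (\<not> le x u \<longrightarrow> le c (f x) \<and> f x \<noteq> c)"
    using R_separating[OF assms(1,6,7)] by blast
  have "\<not> le v u"
    using assms antisym_le by blast
  then have "f u = c" "le c (f v)" "f v \<noteq> c"
    using f(2) assms(1,2) refl_le by auto
  moreover have "(const_map L (f u), const_map L (f v)) \<in> \<rho>"
    using cong_compose[OF cong_refl[OF f(1)] assms(5)] by (simp add: compose_const_map assms(1,2))
  ultimately show ?thesis
    using R_apply_closed[OF f(1) assms(2)] by auto
qed

lemma cong_top:
  assumes "\<rho> \<noteq> Id_on R" "f \<in> R"
  shows "(f, const_map L one) \<in> \<rho>"
proof -
  obtain u v where uv: "u \<in> L" "v \<in> L" "le u v" "u \<noteq> v" "(const_map L u, const_map L v) \<in> \<rho>"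
    using cong_strict_const_maps[OF assms(1)] by blast
  have const_top: "(const_map L c, const_map L one) \<in> \<rho>" if "c \<in> L" for c
    using finite_L that
  proof (induction c rule: finite_upward_induct)
    case (step c)
    show ?case
    proof (cases "c = one")
      case True
      then show ?thesis using cong_refl const_map_in_R one_in_L by blast
    next
      case False
      then obtain d where "d \<in> L" "le c d" "d \<noteq> c" "(const_map L c, const_map L d) \<in> \<rho>"
        using cong_raise_const_map[OF uv step(1)] by blast
      then show ?thesis using step(2) cong_trans by blast
    qed
  qed
  obtain a where a: "a \<in> L" "\<forall>x\<in>L. le a (f x)"
    using R_lower_bound[OF assms(2)] by blast
  have "(jm_join L le f (const_map L a), jm_join L le f (const_map L one)) \<in> \<rho>"
    using cong_jm_join[OF cong_refl[OF assms(2)] const_top[OF a(1)]] .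
  then show ?thesis
    by (simp add: jm_join_lower_const_map[OF assms(2) a] jm_join_top[OF assms(2)])
qed

end

lemma simple_R: "simple_semiring R (jm_join L le) (compose L)"
  unfolding simple_semiring_def
proof (intro conjI allI impI semiring_on_R)
  fix \<rho> assume \<rho>: "semiring_congruence R (jm_join L le) (compose L) \<rho>"
  show "\<rho> = Id_on R \<or> \<rho> = R \<times> R"
  proof (cases "\<rho> = Id_on R")
    case False
    then have "(f, const_map L one) \<in> \<rho>" if "f \<in> R" for f
      using cong_top[OF \<rho> _ that] by blast
    then have "\<rho> = R \<times> R"
      using cong_subset[OF \<rho>] cong_sym[OF \<rho>] cong_trans[OF \<rho>] by blast
    then show ?thesis ..
  qed simp
qed

end

section \<open>Relabelling the semilattice along an injection\<close>

text \<open>Needed only because the theorem asks for a carrier \<open>L :: nat set\<close>.\<close>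

locale relabelling = jslattice L le for L :: "'b set" and le +
  fixes \<phi> :: "'b \<Rightarrow> 'c"
  assumes inj: "inj_on \<phi> L"
begin

abbreviation \<psi> :: "'c \<Rightarrow> 'b" where "\<psi> \<equiv> the_inv_into L \<phi>"

definition relabel_le :: "'c \<Rightarrow> 'c \<Rightarrow> bool" where
  "relabel_le i j \<longleftrightarrow> le (\<psi> i) (\<psi> j)"

definition relabel :: "('b \<Rightarrow> 'b) \<Rightarrow> 'c \<Rightarrow> 'c" where
  "relabel f = (\<lambda>i\<in>\<phi> ` L. \<phi> (f (\<psi> i)))"

lemma psi_phi [simp]: "x \<in> L \<Longrightarrow> \<psi> (\<phi> x) = x"
  by (rule the_inv_into_f_f[OF inj])

lemma phi_eq_iff: "x \<in> L \<Longrightarrow> y \<in> L \<Longrightarrow> \<phi> x = \<phi> y \<longleftrightarrow> x = y"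
  using inj by (auto dest: inj_onD)

lemma relabel_le_phi [simp]: "x \<in> L \<Longrightarrow> y \<in> L \<Longrightarrow> relabel_le (\<phi> x) (\<phi> y) \<longleftrightarrow> le x y"
  by (simp add: relabel_le_def)

lemma relabel_apply [simp]: "x \<in> L \<Longrightarrow> relabel f (\<phi> x) = \<phi> (f x)"
  by (simp add: relabel_def)

lemma is_lub_relabel:
  assumes "x \<in> L" "y \<in> L" "z \<in> L"
  shows "is_lub (\<phi> ` L) relabel_le (\<phi> x) (\<phi> y) (\<phi> z) \<longleftrightarrow> is_lub L le x y z"
  using assms unfolding is_lub_def by auto

lemma join_semilattice_relabel: "join_semilattice (\<phi> ` L) relabel_le"
  unfolding join_semilattice_def
proof (intro conjI ballI impI)
  fix i j k assume "i \<in> \<phi> ` L" "j \<in> \<phi> ` L" "k \<in> \<phi> ` L"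
  then obtain x y z where xyz: "x \<in> L" "y \<in> L" "z \<in> L" and ijk: "i = \<phi> x" "j = \<phi> y" "k = \<phi> z"
    by blast
  show "relabel_le i i" using refl_le[OF xyz(1)] xyz ijk by simp
  show "relabel_le i j \<and> relabel_le j i \<Longrightarrow> i = j" using antisym_le[OF xyz(1,2)] xyz ijk by simp
  show "relabel_le i j \<and> relabel_le j k \<Longrightarrow> relabel_le i k" using trans_le[OF xyz] xyz ijk by simp
  show "\<exists>m. is_lub (\<phi> ` L) relabel_le i j m"
    using is_lub_relabel[OF xyz(1,2) join_closed[OF xyz(1,2)]] join_is_lub[OF xyz(1,2)] ijk by blast
qed

lemma sl_join_relabel:
  assumes "x \<in> L" "y \<in> L"
  shows "sl_join (\<phi> ` L) relabel_le (\<phi> x) (\<phi> y) = \<phi> (join x y)"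
  by (rule sl_join_eqI[OF join_semilattice_relabel]) (simp add: is_lub_relabel assms join_closed join_is_lub)

lemma relabel_extensional: "relabel f \<in> extensional (\<phi> ` L)"
  by (simp add: relabel_def)

lemma relabel_eqI:
  assumes "\<And>x. x \<in> L \<Longrightarrow> h (\<phi> x) = \<phi> (f x)" "h \<in> extensional (\<phi> ` L)"
  shows "relabel f = h"
  using assms by (intro extensionalityI[OF relabel_extensional]) auto

lemma inj_on_relabel: "inj_on relabel (L \<rightarrow>\<^sub>E L)"
proof (rule inj_onI)
  fix f g assume fg: "f \<in> L \<rightarrow>\<^sub>E L" "g \<in> L \<rightarrow>\<^sub>E L" "relabel f = relabel g"
  show "f = g"
  proof (rule extensionalityI[of _ L])
    show "f \<in> extensional L" "g \<in> extensional L" using fg(1,2) by (simp_all add: PiE_def)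
    fix x assume x: "x \<in> L"
    then have "\<phi> (f x) = \<phi> (g x)" using fg(3) relabel_apply by metis
    then show "f x = g x" using phi_eq_iff PiE_mem fg(1,2) x by metis
  qed
qed

lemma relabel_PiE: "f \<in> L \<rightarrow>\<^sub>E L \<Longrightarrow> relabel f \<in> \<phi> ` L \<rightarrow>\<^sub>E \<phi> ` L"
  unfolding relabel_def by (auto simp: PiE_mem)

lemma relabel_const_map: "relabel (const_map L a) = const_map (\<phi> ` L) (\<phi> a)"
  by (rule relabel_eqI) (auto simp: const_map_def)

lemma relabel_compose:
  assumes "g \<in> L \<rightarrow>\<^sub>E L"
  shows "relabel (compose L f g) = compose (\<phi> ` L) (relabel f) (relabel g)"
proof (rule relabel_eqI)
  fix x assume x: "x \<in> L"
  moreover have "g x \<in> L" using PiE_mem[OF assms x] .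
  ultimately show "compose (\<phi> ` L) (relabel f) (relabel g) (\<phi> x) = \<phi> (compose L f g x)"
    by (simp add: compose_eq)
qed simp

lemma relabel_jm_join:
  assumes "f \<in> L \<rightarrow>\<^sub>E L" "g \<in> L \<rightarrow>\<^sub>E L"
  shows "relabel (jm_join L le f g) = jm_join (\<phi> ` L) relabel_le (relabel f) (relabel g)"
proof (rule relabel_eqI)
  fix x assume x: "x \<in> L"
  moreover have "f x \<in> L" "g x \<in> L" using PiE_mem[OF assms(1) x] PiE_mem[OF assms(2) x] .
  ultimately show "jm_join (\<phi> ` L) relabel_le (relabel f) (relabel g) (\<phi> x) = \<phi> (jm_join L le f g x)"
    by (simp add: sl_join_relabel)
qed (simp add: jm_join_def)

lemma relabel_JM:
  assumes "f \<in> JM L le"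
  shows "relabel f \<in> JM (\<phi> ` L) relabel_le"
  unfolding JM_def
proof (intro CollectI conjI ballI)
  have f: "f \<in> L \<rightarrow>\<^sub>E L" using assms by (rule JM_PiE)
  then show "relabel f \<in> \<phi> ` L \<rightarrow>\<^sub>E \<phi> ` L" by (rule relabel_PiE)
  fix i j assume "i \<in> \<phi> ` L" "j \<in> \<phi> ` L"
  then obtain x y where xy: "x \<in> L" "y \<in> L" and ij: "i = \<phi> x" "j = \<phi> y" by blast
  have "join x y \<in> L" "f x \<in> L" "f y \<in> L"
    using join_closed[OF xy] PiE_mem[OF f xy(1)] PiE_mem[OF f xy(2)] .
  then show "relabel f (sl_join (\<phi> ` L) relabel_le i j) = sl_join (\<phi> ` L) relabel_le (relabel f i) (relabel f j)"
    unfolding ij using xy by (simp add: sl_join_relabel assms JM_join_hom)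
qed

lemma admissible_relabel:
  assumes adm: "admissible L le one R"
  shows "admissible (\<phi> ` L) relabel_le (\<phi> one) (relabel ` R)"
proof -
  have R: "subsemiring_JM L le R"
    using adm by (simp add: admissible_def)
  have RPiE: "f \<in> L \<rightarrow>\<^sub>E L" if "f \<in> R" for f
    using R that JM_PiE unfolding subsemiring_JM_def by blast
  show ?thesis
    unfolding admissible_def
  proof (intro conjI ballI)
    show "join_semilattice (\<phi> ` L) relabel_le" by (rule join_semilattice_relabel)
    show "finite (\<phi> ` L)" "2 \<le> card (\<phi> ` L)" "\<phi> one \<in> \<phi> ` L"
      using adm card_image[OF inj] by (simp_all add: admissible_def)
    show "relabel_le i (\<phi> one)" if "i \<in> \<phi> ` L" for i
      using that adm by (auto simp: admissible_def)
    show "subsemiring_JM (\<phi> ` L) relabel_le (relabel ` R)"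
      unfolding subsemiring_JM_def
    proof (intro conjI ballI)
      show "relabel ` R \<noteq> {}" "relabel ` R \<subseteq> JM (\<phi> ` L) relabel_le"
        using R relabel_JM unfolding subsemiring_JM_def by blast+
      fix f' g' assume "f' \<in> relabel ` R" "g' \<in> relabel ` R"
      then obtain f g where fg: "f \<in> R" "g \<in> R" and fg': "f' = relabel f" "g' = relabel g" by blast
      have "jm_join L le f g \<in> R" "compose L f g \<in> R"
        using R fg unfolding subsemiring_JM_def by blast+
      then show "jm_join (\<phi> ` L) relabel_le f' g' \<in> relabel ` R" "compose (\<phi> ` L) f' g' \<in> relabel ` R"
        unfolding fg' relabel_jm_join[OF RPiE[OF fg(1)] RPiE[OF fg(2)], symmetric]
          relabel_compose[OF RPiE[OF fg(2)], symmetric]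
        by blast+
    qed
    show "const_map (\<phi> ` L) i \<in> relabel ` R" if "i \<in> \<phi> ` L" for i
      using that adm relabel_const_map unfolding admissible_def by (metis imageE imageI)
    show "\<exists>a\<in>\<phi> ` L. \<forall>i\<in>\<phi> ` L. relabel_le a (f' i)" if f': "f' \<in> relabel ` R" for f'
    proof -
      obtain f where f: "f \<in> R" "f' = relabel f" using f' by blast
      then obtain a where a: "a \<in> L" "\<forall>x\<in>L. le a (f x)"
        using adm unfolding admissible_def by blast
      have "relabel_le (\<phi> a) (relabel f (\<phi> x))" if "x \<in> L" for x
        using a that PiE_mem[OF RPiE[OF f(1)] that] by simp
      then show ?thesis
        using f(2) a(1) by blast
    qed
    show "\<exists>f'\<in>relabel ` R. \<forall>i\<in>\<phi> ` L. (relabel_le i a' \<longrightarrow> f' i = b') \<and>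
            (\<not> relabel_le i a' \<longrightarrow> relabel_le b' (f' i) \<and> f' i \<noteq> b')"
      if ab': "a' \<in> \<phi> ` L" "b' \<in> \<phi> ` L - {\<phi> one}" for a' b'
    proof -
      obtain a b where ab: "a \<in> L" "b \<in> L" "b \<noteq> one" "a' = \<phi> a" "b' = \<phi> b"
        using ab' by blast
      then obtain f where f: "f \<in> R"
        and sep: "\<forall>x\<in>L. (le x a \<longrightarrow> f x = b) \<and> (\<not> le x a \<longrightarrow> le b (f x) \<and> f x \<noteq> b)"
        using adm unfolding admissible_def by blast
      have "(relabel_le (\<phi> x) a' \<longrightarrow> relabel f (\<phi> x) = b') \<and>
            (\<not> relabel_le (\<phi> x) a' \<longrightarrow> relabel_le b' (relabel f (\<phi> x)) \<and> relabel f (\<phi> x) \<noteq> b')"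
        if x: "x \<in> L" for x
      proof -
        have "f x \<in> L" using PiE_mem[OF RPiE[OF f] x] .
        then show ?thesis
          unfolding ab(4,5) using sep x ab(1,2) by (simp add: phi_eq_iff)
      qed
      then show ?thesis
        using f by (intro bexI[of _ "relabel f"]) auto
    qed
  qed
qed

end

section \<open>Representing a simple semiring on the left ideal of its top\<close>

lemma simple_semiring_congruence_cases:
  assumes simple: "simple_semiring S add mul"
    and refl: "\<And>s. s \<in> S \<Longrightarrow> P s s"
    and sym: "\<And>s t. s \<in> S \<Longrightarrow> t \<in> S \<Longrightarrow> P s t \<Longrightarrow> P t s"
    and trans: "\<And>s t u. s \<in> S \<Longrightarrow> t \<in> S \<Longrightarrow> u \<in> S \<Longrightarrow> P s t \<Longrightarrow> P t u \<Longrightarrow> P s u"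
    and compat: "\<And>x y u v. x \<in> S \<Longrightarrow> y \<in> S \<Longrightarrow> u \<in> S \<Longrightarrow> v \<in> S \<Longrightarrow> P x y \<Longrightarrow> P u v \<Longrightarrow>
                   P (add x u) (add y v) \<and> P (mul x u) (mul y v)"
  shows "(\<forall>s\<in>S. \<forall>t\<in>S. P s t \<longrightarrow> s = t) \<or> (\<forall>s\<in>S. \<forall>t\<in>S. P s t)"
proof -
  define \<rho> where "\<rho> = {(s, t). s \<in> S \<and> t \<in> S \<and> P s t}"
  have closed: "x \<in> S \<Longrightarrow> y \<in> S \<Longrightarrow> add x y \<in> S \<and> mul x y \<in> S" for x y
    using simple unfolding simple_semiring_def semiring_on_def by blast
  have "equiv S \<rho>"
    by (rule equivI) (auto simp: \<rho>_def refl_on_def sym_def trans_def intro: refl sym elim: trans)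
  moreover have "(x, y) \<in> \<rho> \<Longrightarrow> (u, v) \<in> \<rho> \<Longrightarrow> (add x u, add y v) \<in> \<rho> \<and> (mul x u, mul y v) \<in> \<rho>"
    for x y u v
    using compat closed unfolding \<rho>_def by simp
  ultimately have "\<rho> = Id_on S \<or> \<rho> = S \<times> S"
    using simple unfolding simple_semiring_def semiring_congruence_def by blast
  then show ?thesis
    unfolding \<rho>_def Id_on_def by blast
qed

locale top_left_absorbing =
  fixes S :: "'a set" and add mul g
  assumes simple: "simple_semiring S add mul"
    and add_idempotent: "add_idempotent S add"
    and finite_S: "finite S"
    and card_S: "2 < card S"
    and greatest: "greatest_elem S add g"
    and left_absorbing: "left_absorbing S mul g"
    and not_right_absorbing: "\<not> right_absorbing S mul g"
begin

lemma semiring: "semiring_on S add mul"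
  using simple by (simp add: simple_semiring_def)

lemma S_add_closed: "x \<in> S \<Longrightarrow> y \<in> S \<Longrightarrow> add x y \<in> S"
  using semiring unfolding semiring_on_def by blast

lemma S_mul_closed: "x \<in> S \<Longrightarrow> y \<in> S \<Longrightarrow> mul x y \<in> S"
  using semiring unfolding semiring_on_def by blast

lemma S_add_assoc: "x \<in> S \<Longrightarrow> y \<in> S \<Longrightarrow> z \<in> S \<Longrightarrow> add (add x y) z = add x (add y z)"
  using semiring unfolding semiring_on_def by blast

lemma S_add_comm: "x \<in> S \<Longrightarrow> y \<in> S \<Longrightarrow> add x y = add y x"
  using semiring unfolding semiring_on_def by blast

lemma S_mul_assoc: "x \<in> S \<Longrightarrow> y \<in> S \<Longrightarrow> z \<in> S \<Longrightarrow> mul (mul x y) z = mul x (mul y z)"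
  using semiring unfolding semiring_on_def by blast

lemma S_distrib_left: "x \<in> S \<Longrightarrow> y \<in> S \<Longrightarrow> z \<in> S \<Longrightarrow> mul x (add y z) = add (mul x y) (mul x z)"
  using semiring unfolding semiring_on_def by blast

lemma S_distrib_right: "x \<in> S \<Longrightarrow> y \<in> S \<Longrightarrow> z \<in> S \<Longrightarrow> mul (add x y) z = add (mul x z) (mul y z)"
  using semiring unfolding semiring_on_def by blast

lemma S_add_idem: "x \<in> S \<Longrightarrow> add x x = x"
  using add_idempotent by (simp add: add_idempotent_def)

lemma g_in_S: "g \<in> S"
  and add_g: "x \<in> S \<Longrightarrow> add x g = g"
  using greatest by (simp_all add: greatest_elem_def)

lemma mul_g_left: "s \<in> S \<Longrightarrow> mul g s = g"
  using left_absorbing by (simp add: left_absorbing_def)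

lemma mul_g_right_ne: "\<exists>s\<in>S. mul s g \<noteq> g"
  using not_right_absorbing by (simp add: right_absorbing_def)

abbreviation sle :: "'a \<Rightarrow> 'a \<Rightarrow> bool" where "sle x y \<equiv> add x y = y"

lemma sle_antisym: "x \<in> S \<Longrightarrow> y \<in> S \<Longrightarrow> sle x y \<Longrightarrow> sle y x \<Longrightarrow> x = y"
  using S_add_comm by metis

lemma sle_trans: "x \<in> S \<Longrightarrow> y \<in> S \<Longrightarrow> z \<in> S \<Longrightarrow> sle x y \<Longrightarrow> sle y z \<Longrightarrow> sle x z"
  using S_add_assoc by metis

lemma sle_add_left: "x \<in> S \<Longrightarrow> y \<in> S \<Longrightarrow> sle x (add x y)"
  using S_add_assoc S_add_idem by metis

lemma sle_add_right: "x \<in> S \<Longrightarrow> y \<in> S \<Longrightarrow> sle y (add x y)"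
  using sle_add_left S_add_comm by metis

lemma add_sle_iff:
  assumes "x \<in> S" "y \<in> S" "z \<in> S"
  shows "sle (add x y) z \<longleftrightarrow> sle x z \<and> sle y z"
proof
  assume "sle (add x y) z"
  then show "sle x z \<and> sle y z"
    using sle_trans[OF _ S_add_closed] sle_add_left sle_add_right assms by metis
next
  assume "sle x z \<and> sle y z"
  then show "sle (add x y) z"
    using S_add_assoc assms by metis
qed

lemma mul_left_mono: "x \<in> S \<Longrightarrow> y \<in> S \<Longrightarrow> z \<in> S \<Longrightarrow> sle x y \<Longrightarrow> sle (mul z x) (mul z y)"
  using S_distrib_left by metis

definition Sg :: "'a set" where "Sg = (\<lambda>s. mul s g) ` S"

lemma Sg_subset: "Sg \<subseteq> S"
  unfolding Sg_def using S_mul_closed g_in_S by blast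

lemma g_in_Sg: "g \<in> Sg"
  unfolding Sg_def using mul_g_left g_in_S by (metis image_eqI)

lemma Sg_mul_absorb: "y \<in> Sg \<Longrightarrow> z \<in> S \<Longrightarrow> mul y z = y"
  unfolding Sg_def using S_mul_assoc mul_g_left g_in_S by auto

lemma Sg_add_closed:
  assumes "x \<in> Sg" "y \<in> Sg"
  shows "add x y \<in> Sg"
proof -
  obtain s t where "s \<in> S" "t \<in> S" "x = mul s g" "y = mul t g"
    using assms unfolding Sg_def by blast
  then show ?thesis
    unfolding Sg_def using S_distrib_right S_add_closed g_in_S by (metis image_eqI)
qed

lemma Sg_mul_closed:
  assumes "s \<in> S" "y \<in> Sg"
  shows "mul s y \<in> Sg"
proof -
  obtain t where "t \<in> S" "y = mul t g"
    using assms(2) unfolding Sg_def by blast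
  then show ?thesis
    unfolding Sg_def using assms(1) S_mul_assoc S_mul_closed g_in_S by (metis image_eqI)
qed

lemma Sg_ne_g: "\<exists>b\<in>Sg. b \<noteq> g"
  using mul_g_right_ne unfolding Sg_def by blast

lemma Sg_faithful:
  assumes "s \<in> S" "t \<in> S" "\<forall>x\<in>Sg. mul s x = mul t x"
  shows "s = t"
proof -
  let ?P = "\<lambda>s t. \<forall>x\<in>Sg. mul s x = mul t x"
  have "(\<forall>s\<in>S. \<forall>t\<in>S. ?P s t \<longrightarrow> s = t) \<or> (\<forall>s\<in>S. \<forall>t\<in>S. ?P s t)"
    by (rule simple_semiring_congruence_cases[OF simple])
      (simp_all add: S_distrib_right S_mul_assoc Sg_mul_closed subsetD[OF Sg_subset])
  moreover have "\<not> ?P s g" if "s \<in> S" "mul s g \<noteq> g" for s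
    using that g_in_Sg mul_g_left g_in_S by metis
  ultimately show ?thesis
    using assms mul_g_right_ne g_in_S by blast
qed

definition Sg_bounded :: "'a set" where
  "Sg_bounded = {s \<in> S. \<exists>a\<in>Sg. \<forall>x\<in>Sg. sle a (mul s x)}"

lemma Sg_bounded_add:
  assumes "s \<in> Sg_bounded" "t \<in> S"
  shows "add s t \<in> Sg_bounded"
proof -
  obtain a where s: "s \<in> S" and a: "a \<in> Sg" "\<forall>x\<in>Sg. sle a (mul s x)"
    using assms(1) unfolding Sg_bounded_def by blast
  have "sle a (mul (add s t) x)" if x: "x \<in> Sg" for x
  proof -
    have xS: "x \<in> S" and aS: "a \<in> S" using x a(1) Sg_subset by blast+
    have sx: "mul s x \<in> S" and tx: "mul t x \<in> S"
      using S_mul_closed s assms(2) xS by blast+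
    have "sle (mul s x) (mul (add s t) x)"
      unfolding S_distrib_right[OF s assms(2) xS] by (rule sle_add_left[OF sx tx])
    moreover have "sle a (mul s x)" using a(2) x by blast
    ultimately show ?thesis
      using sle_trans[OF aS sx S_mul_closed[OF S_add_closed[OF s assms(2)] xS]] by blast
  qed
  then show ?thesis
    unfolding Sg_bounded_def using a(1) s assms(2) S_add_closed by blast
qed

lemma Sg_bounded_mul_right:
  assumes "s \<in> Sg_bounded" "t \<in> S"
  shows "mul s t \<in> Sg_bounded"
proof -
  obtain a where s: "s \<in> S" and a: "a \<in> Sg" "\<forall>x\<in>Sg. sle a (mul s x)"
    using assms(1) unfolding Sg_bounded_def by blast
  have "sle a (mul (mul s t) x)" if "x \<in> Sg" for x
    using a(2) Sg_mul_closed[OF assms(2) that] S_mul_assoc[OF s assms(2)] that Sg_subset by auto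
  then show ?thesis
    unfolding Sg_bounded_def using a(1) s assms(2) S_mul_closed by blast
qed

lemma Sg_bounded_mul_left:
  assumes "s \<in> Sg_bounded" "t \<in> S"
  shows "mul t s \<in> Sg_bounded"
proof -
  obtain a where s: "s \<in> S" and a: "a \<in> Sg" "\<forall>x\<in>Sg. sle a (mul s x)"
    using assms(1) unfolding Sg_bounded_def by blast
  have "sle (mul t a) (mul (mul t s) x)" if x: "x \<in> Sg" for x
  proof -
    have xS: "x \<in> S" and aS: "a \<in> S" using x a(1) Sg_subset by blast+
    show ?thesis
      unfolding S_mul_assoc[OF assms(2) s xS]
      by (rule mul_left_mono[OF aS S_mul_closed[OF s xS] assms(2)]) (use a(2) x in blast)
  qed
  then show ?thesis
    unfolding Sg_bounded_def using Sg_mul_closed[OF assms(2) a(1)] s assms(2) S_mul_closed by blast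
qed

lemma Sg_lower_bound:
  assumes "s \<in> S"
  shows "\<exists>a\<in>Sg. \<forall>x\<in>Sg. sle a (mul s x)"
proof -
  let ?P = "\<lambda>s t. s = t \<or> (s \<in> Sg_bounded \<and> t \<in> Sg_bounded)"
  have cases: "(\<forall>s\<in>S. \<forall>t\<in>S. ?P s t \<longrightarrow> s = t) \<or> (\<forall>s\<in>S. \<forall>t\<in>S. ?P s t)"
  proof (rule simple_semiring_congruence_cases[OF simple])
    fix x y u v assume xyuv: "x \<in> S" "y \<in> S" "u \<in> S" "v \<in> S" and "?P x y" "?P u v"
    then consider "x = y" "u = v" | "x \<in> Sg_bounded" "y \<in> Sg_bounded" | "u \<in> Sg_bounded" "v \<in> Sg_bounded"
      by blast
    then show "?P (add x u) (add y v) \<and> ?P (mul x u) (mul y v)"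
    proof cases
      case 2
      then show ?thesis using Sg_bounded_add Sg_bounded_mul_right xyuv by blast
    next
      case 3
      then show ?thesis using Sg_bounded_add Sg_bounded_mul_left S_add_comm xyuv by metis
    qed simp
  qed blast+
  have bounded_Sg: "b \<in> Sg_bounded" if b: "b \<in> Sg" for b
  proof -
    have "b \<in> S" using b Sg_subset by blast
    then have "\<forall>x\<in>Sg. sle b (mul b x)"
      using Sg_mul_absorb[OF b] Sg_subset S_add_idem by auto
    then show ?thesis
      unfolding Sg_bounded_def using b \<open>b \<in> S\<close> by blast
  qed
  obtain b where b: "b \<in> Sg" "b \<noteq> g"
    using Sg_ne_g by blast
  have "\<not> (\<forall>s\<in>S. \<forall>t\<in>S. ?P s t \<longrightarrow> s = t)"
    using b bounded_Sg[OF b(1)] bounded_Sg[OF g_in_Sg] Sg_subset g_in_S by blast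
  with cases have "?P s g"
    using assms g_in_S by blast
  then have "s \<in> Sg_bounded"
    using bounded_Sg[OF g_in_Sg] by blast
  then show ?thesis
    unfolding Sg_bounded_def by blast
qed

text \<open>
  For \<open>b \<in> S g - {g}\<close>, passing the same tests \<open>u s y \<le> b\<close> is a congruence. It is not total: otherwise
  already the tests \<open>s g \<le> b\<close> would give a congruence with at most two classes that separates \<open>b\<close>
  from \<open>g\<close>, hence the identity, contradicting \<open>2 < card S\<close>.
\<close>

lemma Sg_tests_separate_g:
  assumes b: "b \<in> Sg" "b \<noteq> g"
  shows "\<exists>w\<in>S. \<exists>s\<in>S. \<not> (sle (mul w (mul s g)) b \<longleftrightarrow> sle (mul w g) b)"
proof (rule ccontr)
  assume "\<not> ?thesis"
  then have test: "sle (mul w (mul s g)) b \<longleftrightarrow> sle (mul w g) b" if "w \<in> S" "s \<in> S" for w s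
    using that by blast
  have bS: "b \<in> S" using b(1) Sg_subset by blast
  let ?Q = "\<lambda>s t. sle (mul s g) b \<longleftrightarrow> sle (mul t g) b"
  have below_add: "sle (mul (add x u) g) b \<longleftrightarrow> sle (mul x g) b \<and> sle (mul u g) b"
    if "x \<in> S" "u \<in> S" for x u
    unfolding S_distrib_right[OF that g_in_S] using add_sle_iff S_mul_closed that g_in_S bS by blast
  have below_mul: "sle (mul (mul x u) g) b \<longleftrightarrow> sle (mul x g) b" if "x \<in> S" "u \<in> S" for x u
    unfolding S_mul_assoc[OF that g_in_S] using test that by blast
  have "(\<forall>s\<in>S. \<forall>t\<in>S. ?Q s t \<longrightarrow> s = t) \<or> (\<forall>s\<in>S. \<forall>t\<in>S. ?Q s t)"
    by (rule simple_semiring_congruence_cases[OF simple]) (simp_all add: below_add below_mul)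
  moreover have "\<not> ?Q b g"
    using Sg_mul_absorb[OF b(1) g_in_S] S_add_idem[OF bS] mul_g_left[OF g_in_S] add_g[OF bS] S_add_comm[OF bS g_in_S] b(2)
    by auto
  ultimately have "inj_on (\<lambda>s. sle (mul s g) b) S"
    using bS g_in_S unfolding inj_on_def by blast
  then have "card S \<le> card (UNIV :: bool set)"
    by (rule card_inj_on_le) auto
  then show False
    using card_S by simp
qed

lemma Sg_tests_eq:
  assumes b: "b \<in> Sg" "b \<noteq> g" and st: "s \<in> S" "t \<in> S"
    and tests: "\<forall>u\<in>S. \<forall>y\<in>Sg. sle (mul u (mul s y)) b \<longleftrightarrow> sle (mul u (mul t y)) b"
  shows "s = t"
proof -
  have bS: "b \<in> S" using b(1) Sg_subset by blast
  let ?P = "\<lambda>s t. \<forall>u\<in>S. \<forall>y\<in>Sg. sle (mul u (mul s y)) b \<longleftrightarrow> sle (mul u (mul t y)) b"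
  have below_add: "sle (mul w (mul (add x u) y)) b \<longleftrightarrow> sle (mul w (mul x y)) b \<and> sle (mul w (mul u y)) b"
    if "w \<in> S" "x \<in> S" "u \<in> S" "y \<in> Sg" for w x u y
  proof -
    have yS: "y \<in> S" using that(4) Sg_subset by blast
    have xy: "mul x y \<in> S" and uy: "mul u y \<in> S"
      using S_mul_closed that(2,3) yS by blast+
    have "mul w (mul (add x u) y) = add (mul w (mul x y)) (mul w (mul u y))"
      using S_distrib_right[OF that(2,3) yS] S_distrib_left[OF that(1) xy uy] by simp
    then show ?thesis
      using add_sle_iff[OF S_mul_closed[OF that(1) xy] S_mul_closed[OF that(1) uy] bS] by simp
  qed
  have mul_assoc3: "mul w (mul (mul x u) y) = mul (mul w x) (mul u y)"
    if "w \<in> S" "x \<in> S" "u \<in> S" "y \<in> Sg" for w x u y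
    using that Sg_subset S_mul_assoc S_mul_closed by (metis subsetD)
  have "(\<forall>s\<in>S. \<forall>t\<in>S. ?P s t \<longrightarrow> s = t) \<or> (\<forall>s\<in>S. \<forall>t\<in>S. ?P s t)"
  proof (rule simple_semiring_congruence_cases[OF simple])
    fix x y u v assume xyuv: "x \<in> S" "y \<in> S" "u \<in> S" "v \<in> S" and P: "?P x y" "?P u v"
    show "?P (add x u) (add y v) \<and> ?P (mul x u) (mul y v)"
    proof (intro conjI ballI)
      fix w z assume wz: "w \<in> S" "z \<in> Sg"
      show "sle (mul w (mul (add x u) z)) b \<longleftrightarrow> sle (mul w (mul (add y v) z)) b"
        using below_add wz xyuv P by simp
      have "sle (mul w (mul (mul x u) z)) b \<longleftrightarrow> sle (mul w (mul x (mul u z))) b"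
        using S_mul_assoc xyuv wz Sg_subset by auto
      also have "\<dots> \<longleftrightarrow> sle (mul w (mul y (mul u z))) b"
        using P(1) wz Sg_mul_closed xyuv by blast
      also have "\<dots> \<longleftrightarrow> sle (mul (mul w y) (mul u z)) b"
        using S_mul_assoc xyuv wz Sg_subset S_mul_closed by auto
      also have "\<dots> \<longleftrightarrow> sle (mul (mul w y) (mul v z)) b"
        using P(2) wz S_mul_closed xyuv by blast
      also have "\<dots> \<longleftrightarrow> sle (mul w (mul (mul y v) z)) b"
        using mul_assoc3 wz xyuv by simp
      finally show "sle (mul w (mul (mul x u) z)) b \<longleftrightarrow> sle (mul w (mul (mul y v) z)) b" .
    qed
  qed blast+
  moreover have "\<not> (\<forall>s\<in>S. \<forall>t\<in>S. ?P s t)"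
  proof
    assume "\<forall>s\<in>S. \<forall>t\<in>S. ?P s t"
    then have "sle (mul w (mul s g)) b \<longleftrightarrow> sle (mul w g) b" if "w \<in> S" "s \<in> S" for w s
      using that g_in_S g_in_Sg mul_g_left by metis
    then show False
      using Sg_tests_separate_g[OF b] by blast
  qed
  ultimately show ?thesis
    using st tests by blast
qed

lemma separating_element:
  assumes "a \<in> Sg" "x \<in> Sg" "b \<in> Sg" "b \<noteq> g" "\<not> sle x a"
  shows "\<exists>u\<in>S. sle (mul u a) b \<and> \<not> sle (mul u x) b"
proof -
  have aS: "a \<in> S" and xS: "x \<in> S" and bS: "b \<in> S"
    using assms Sg_subset by blast+
  have ax: "add a x \<in> Sg" and axS: "add a x \<in> S"
    using Sg_add_closed assms(1,2) S_add_closed aS xS by blast+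
  have "a \<noteq> add a x"
    using assms(5) S_add_comm[OF aS xS] by simp
  then obtain u y where uy: "u \<in> S" "y \<in> Sg"
    and differ: "\<not> (sle (mul u (mul a y)) b \<longleftrightarrow> sle (mul u (mul (add a x) y)) b)"
    using Sg_tests_eq[OF assms(3,4) aS axS] by blast
  have "y \<in> S" using uy(2) Sg_subset by blast
  then have "mul u (mul (add a x) y) = add (mul u a) (mul u x)" "mul u (mul a y) = mul u a"
    using Sg_mul_absorb[OF ax] Sg_mul_absorb[OF assms(1)] S_distrib_left[OF uy(1) aS xS] by simp_all
  then show ?thesis
    using differ add_sle_iff[OF S_mul_closed[OF uy(1) aS] S_mul_closed[OF uy(1) xS] bS] uy(1) by auto
qed

lemma separating_element_finite:
  assumes "finite X" "X \<subseteq> {x \<in> Sg. \<not> sle x a}" and a: "a \<in> Sg" and b: "b \<in> Sg" "b \<noteq> g"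
  shows "\<exists>t\<in>S. sle (mul t a) b \<and> (\<forall>x\<in>X. \<not> sle (mul t x) b)"
  using assms(1,2)
proof (induction X rule: finite_induct)
  case empty
  have "a \<in> S" "b \<in> S" using a b(1) Sg_subset by blast+
  then show ?case
    by (intro bexI[of _ b]) (simp_all add: Sg_mul_absorb[OF b(1)] S_add_idem)
next
  case (insert x X)
  have aS: "a \<in> S" and bS: "b \<in> S" using a b(1) Sg_subset by blast+
  obtain t where t: "t \<in> S" "sle (mul t a) b" "\<forall>z\<in>X. \<not> sle (mul t z) b"
    using insert by blast
  obtain u where u: "u \<in> S" "sle (mul u a) b" "\<not> sle (mul u x) b"
    using separating_element[OF a _ b] insert.prems by blast
  have below: "sle (mul (add t u) z) b \<longleftrightarrow> sle (mul t z) b \<and> sle (mul u z) b" if "z \<in> S" for z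
    unfolding S_distrib_right[OF t(1) u(1) that]
    by (rule add_sle_iff[OF S_mul_closed[OF t(1) that] S_mul_closed[OF u(1) that] bS])
  have "\<not> sle (mul (add t u) z) b" if z: "z \<in> insert x X" for z
  proof -
    have "z \<in> S" using z insert.prems Sg_subset by blast
    then show ?thesis
      unfolding below[OF \<open>z \<in> S\<close>] using z t(3) u(3) by auto
  qed
  moreover have "sle (mul (add t u) a) b"
    using below[OF aS] t(2) u(2) by blast
  ultimately show ?case
    using S_add_closed[OF t(1) u(1)] by auto
qed

lemma separating_map:
  assumes a: "a \<in> Sg" and b: "b \<in> Sg" "b \<noteq> g"
  shows "\<exists>s\<in>S. \<forall>x\<in>Sg. (sle x a \<longrightarrow> mul s x = b) \<and> (\<not> sle x a \<longrightarrow> sle b (mul s x) \<and> mul s x \<noteq> b)"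
proof -
  have aS: "a \<in> S" and bS: "b \<in> S" using a b(1) Sg_subset by blast+
  have "finite {x \<in> Sg. \<not> sle x a}"
    by (rule finite_subset[OF _ finite_S]) (use Sg_subset in auto)
  from separating_element_finite[OF this subset_refl a b]
  obtain t where t: "t \<in> S" "sle (mul t a) b" "\<forall>x\<in>{x \<in> Sg. \<not> sle x a}. \<not> sle (mul t x) b"
    by blast
  have "(sle x a \<longrightarrow> mul (add b t) x = b) \<and> (\<not> sle x a \<longrightarrow> sle b (mul (add b t) x) \<and> mul (add b t) x \<noteq> b)"
    if x: "x \<in> Sg" for x
  proof -
    have xS: "x \<in> S" using x Sg_subset by blast
    have tx: "mul t x \<in> S" using S_mul_closed t(1) xS by blast
    have sx: "mul (add b t) x = add b (mul t x)"
      using S_distrib_right[OF bS t(1) xS] Sg_mul_absorb[OF b(1) xS] by simp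
    have "sle (mul t x) b" if "sle x a"
      using sle_trans[OF tx S_mul_closed[OF t(1) aS] bS mul_left_mono[OF xS aS t(1) that] t(2)] .
    then have "sle x a \<longrightarrow> mul (add b t) x = b"
      unfolding sx S_add_comm[OF bS tx] by blast
    moreover have "\<not> sle (mul t x) b" if "\<not> sle x a"
      using t(3) x that by blast
    then have "\<not> sle x a \<longrightarrow> sle b (mul (add b t) x) \<and> mul (add b t) x \<noteq> b"
      unfolding sx using sle_add_left[OF bS tx] S_add_comm[OF bS tx] by auto
    ultimately show ?thesis ..
  qed
  with S_add_closed[OF bS t(1)] show ?thesis
    by blast
qed

lemma is_lub_Sg: "x \<in> Sg \<Longrightarrow> y \<in> Sg \<Longrightarrow> is_lub Sg sle x y (add x y)"
  unfolding is_lub_def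
  using Sg_add_closed sle_add_left sle_add_right add_sle_iff Sg_subset by (meson subsetD)

lemma join_semilattice_Sg: "join_semilattice Sg sle"
  unfolding join_semilattice_def
proof (intro conjI ballI impI)
  fix x y z assume xyz: "x \<in> Sg" "y \<in> Sg" "z \<in> Sg"
  then have S: "x \<in> S" "y \<in> S" "z \<in> S" using Sg_subset by blast+
  show "sle x x" by (rule S_add_idem[OF S(1)])
  show "sle x y \<and> sle y x \<Longrightarrow> x = y" using sle_antisym[OF S(1,2)] by blast
  show "sle x y \<and> sle y z \<Longrightarrow> sle x z" using sle_trans[OF S] by blast
  show "\<exists>l. is_lub Sg sle x y l" using is_lub_Sg[OF xyz(1,2)] by blast
qed

lemma sl_join_Sg: "x \<in> Sg \<Longrightarrow> y \<in> Sg \<Longrightarrow> sl_join Sg sle x y = add x y"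
  by (rule sl_join_eqI[OF join_semilattice_Sg is_lub_Sg])

definition act :: "'a \<Rightarrow> 'a \<Rightarrow> 'a" where
  "act s = (\<lambda>x\<in>Sg. mul s x)"

lemma act_JM:
  assumes "s \<in> S"
  shows "act s \<in> JM Sg sle"
  unfolding JM_def
proof (intro CollectI conjI ballI)
  show "act s \<in> Sg \<rightarrow>\<^sub>E Sg"
    unfolding act_def using Sg_mul_closed[OF assms] by simp
  fix x y assume xy: "x \<in> Sg" "y \<in> Sg"
  then have "x \<in> S" "y \<in> S" using Sg_subset by blast+
  then show "act s (sl_join Sg sle x y) = sl_join Sg sle (act s x) (act s y)"
    unfolding act_def
    using xy sl_join_Sg Sg_add_closed Sg_mul_closed[OF assms] S_distrib_left[OF assms] by simp
qed

lemma act_add: "s \<in> S \<Longrightarrow> t \<in> S \<Longrightarrow> act (add s t) = jm_join Sg sle (act s) (act t)"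
  unfolding act_def jm_join_def
  using sl_join_Sg Sg_mul_closed S_distrib_right Sg_subset by (intro restrict_ext) auto

lemma act_mul: "s \<in> S \<Longrightarrow> t \<in> S \<Longrightarrow> act (mul s t) = compose Sg (act s) (act t)"
  unfolding act_def compose_def
  using Sg_mul_closed S_mul_assoc Sg_subset by (intro restrict_ext) auto

lemma act_Sg: "a \<in> Sg \<Longrightarrow> act a = const_map Sg a"
  unfolding act_def const_map_def
  using Sg_mul_absorb Sg_subset by (intro restrict_ext) auto

lemma inj_on_act: "inj_on act S"
proof (rule inj_onI)
  fix s t assume st: "s \<in> S" "t \<in> S" and "act s = act t"
  then have "\<forall>x\<in>Sg. mul s x = mul t x"
    unfolding act_def by (metis restrict_apply')
  with st show "s = t" by (rule Sg_faithful)
qed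

lemma admissible_Sg: "admissible Sg sle g (act ` S)"
  unfolding admissible_def
proof (intro conjI ballI)
  show "join_semilattice Sg sle" by (rule join_semilattice_Sg)
  show "finite Sg" using finite_subset[OF Sg_subset finite_S] .
  obtain b where "b \<in> Sg" "b \<noteq> g" using Sg_ne_g by blast
  then have "card {b, g} \<le> card Sg"
    using g_in_Sg by (intro card_mono \<open>finite Sg\<close>) auto
  then show "2 \<le> card Sg"
    using \<open>b \<noteq> g\<close> by simp
  show "g \<in> Sg" by (rule g_in_Sg)
  show "sle x g" if "x \<in> Sg" for x
    using that Sg_subset by (intro add_g) blast
  show "subsemiring_JM Sg sle (act ` S)"
    unfolding subsemiring_JM_def
  proof (intro conjI ballI)
    show "act ` S \<noteq> {}" using g_in_S by blast
    show "act ` S \<subseteq> JM Sg sle" using act_JM by blast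
    fix f h assume "f \<in> act ` S" "h \<in> act ` S"
    then obtain s t where st: "s \<in> S" "t \<in> S" and fh: "f = act s" "h = act t" by blast
    show "jm_join Sg sle f h \<in> act ` S"
      unfolding fh act_add[OF st, symmetric] using S_add_closed[OF st] by (rule imageI)
    show "compose Sg f h \<in> act ` S"
      unfolding fh act_mul[OF st, symmetric] using S_mul_closed[OF st] by (rule imageI)
  qed
  show "const_map Sg a \<in> act ` S" if "a \<in> Sg" for a
    unfolding act_Sg[OF that, symmetric] using that Sg_subset by blast
  show "\<exists>a\<in>Sg. \<forall>x\<in>Sg. sle a (f x)" if f: "f \<in> act ` S" for f
  proof -
    obtain s where "s \<in> S" "f = act s" using f by blast
    moreover obtain a where "a \<in> Sg" "\<forall>x\<in>Sg. sle a (mul s x)"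
      using Sg_lower_bound[OF \<open>s \<in> S\<close>] by blast
    ultimately show ?thesis
      unfolding act_def by auto
  qed
  show "\<exists>f\<in>act ` S. \<forall>x\<in>Sg. (sle x a \<longrightarrow> f x = b) \<and> (\<not> sle x a \<longrightarrow> sle b (f x) \<and> f x \<noteq> b)"
    if ab: "a \<in> Sg" "b \<in> Sg - {g}" for a b
  proof -
    obtain s where "s \<in> S" and sep: "\<forall>x\<in>Sg. (sle x a \<longrightarrow> mul s x = b) \<and> (\<not> sle x a \<longrightarrow> sle b (mul s x) \<and> mul s x \<noteq> b)"
      using separating_map ab by blast
    moreover have "act s x = mul s x" if "x \<in> Sg" for x
      using that unfolding act_def by simp
    ultimately show ?thesis
      by (intro bexI[of _ "act s"] ballI) (simp_all add: image_eqI)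
  qed
qed

lemma nat_representation:
  "\<exists>(L :: nat set) le one R h. admissible L le one R
     \<and> bij_betw h S R
     \<and> (\<forall>x\<in>S. \<forall>y\<in>S. h (add x y) = jm_join L le (h x) (h y) \<and> h (mul x y) = compose L (h x) (h y))"
proof -
  obtain \<phi> :: "'a \<Rightarrow> nat" where "inj_on \<phi> Sg"
    using finite_imp_inj_to_nat_seg[OF finite_subset[OF Sg_subset finite_S]] by blast
  with join_semilattice_Sg interpret relabelling Sg sle \<phi>
    by (rule relabelling.intro[OF jslattice.intro, unfolded relabelling_axioms_def])
  have act_PiE: "act s \<in> Sg \<rightarrow>\<^sub>E Sg" if "s \<in> S" for s
    using act_JM[OF that] by (rule JM_PiE)
  have "bij_betw act S (act ` S)"
    using inj_on_act by (rule inj_on_imp_bij_betw)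
  moreover have "act ` S \<subseteq> Sg \<rightarrow>\<^sub>E Sg"
    using act_PiE by (rule image_subsetI)
  then have "bij_betw relabel (act ` S) (relabel ` act ` S)"
    by (intro inj_on_imp_bij_betw inj_on_subset[OF inj_on_relabel])
  ultimately have bij: "bij_betw (relabel \<circ> act) S (relabel ` act ` S)"
    by (rule bij_betw_trans)
  have hom: "(relabel \<circ> act) (add x y) = jm_join (\<phi> ` Sg) relabel_le ((relabel \<circ> act) x) ((relabel \<circ> act) y)
      \<and> (relabel \<circ> act) (mul x y) = compose (\<phi> ` Sg) ((relabel \<circ> act) x) ((relabel \<circ> act) y)"
    if xy: "x \<in> S" "y \<in> S" for x y
    unfolding comp_apply act_add[OF xy] act_mul[OF xy]
    using relabel_jm_join[OF act_PiE[OF xy(1)] act_PiE[OF xy(2)]]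
      relabel_compose[OF act_PiE[OF xy(2)]] by blast
  show ?thesis
  proof (intro exI conjI)
    show "admissible (\<phi> ` Sg) relabel_le (\<phi> g) (relabel ` act ` S)"
      by (rule admissible_relabel[OF admissible_Sg])
    show "bij_betw (relabel \<circ> act) S (relabel ` act ` S)"
      by (rule bij)
    show "\<forall>x\<in>S. \<forall>y\<in>S. (relabel \<circ> act) (add x y) = jm_join (\<phi> ` Sg) relabel_le ((relabel \<circ> act) x) ((relabel \<circ> act) y)
      \<and> (relabel \<circ> act) (mul x y) = compose (\<phi> ` Sg) ((relabel \<circ> act) x) ((relabel \<circ> act) y)"
      using hom by blast
  qed
qed

end

theorem theorem5p3:
  shows "(\<forall>(L :: 'b set) le one R. admissible L le one R \<longrightarrow>
           finite R
           \<and> simple_semiring R (jm_join L le) (compose L)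
           \<and> add_idempotent R (jm_join L le)
           \<and> (\<exists>g. greatest_elem R (jm_join L le) g
                  \<and> left_absorbing R (compose L) g
                  \<and> \<not> right_absorbing R (compose L) g))
    \<and> (\<forall>(S :: 'a set) add mul.
           finite S \<and> simple_semiring S add mul \<and> add_idempotent S add \<and> card S > 2
           \<and> (\<exists>g. greatest_elem S add g \<and> left_absorbing S mul g \<and> \<not> right_absorbing S mul g)
           \<longrightarrow> (\<exists>(L :: nat set) le one R h. admissible L le one R
                  \<and> bij_betw h S R
                  \<and> (\<forall>x\<in>S. \<forall>y\<in>S. h (add x y) = jm_join L le (h x) (h y)
                                 \<and> h (mul x y) = compose L (h x) (h y))))"
proof (rule conjI; intro allI impI)
  fix L :: "'b set" and le one R
  assume "admissible L le one R"
  then interpret admissible_JM L le one R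
    by unfold_locales
  show "finite R \<and> simple_semiring R (jm_join L le) (compose L) \<and> add_idempotent R (jm_join L le)
    \<and> (\<exists>g. greatest_elem R (jm_join L le) g \<and> left_absorbing R (compose L) g
           \<and> \<not> right_absorbing R (compose L) g)"
    using finite_R simple_R add_idempotent_R greatest_elem_top left_absorbing_top not_right_absorbing_top
    by blast
next
  fix S :: "'a set" and add mul
  assume "finite S \<and> simple_semiring S add mul \<and> add_idempotent S add \<and> card S > 2
    \<and> (\<exists>g. greatest_elem S add g \<and> left_absorbing S mul g \<and> \<not> right_absorbing S mul g)"
  then obtain g where "top_left_absorbing S add mul g"
    by (auto intro: top_left_absorbing.intro)
  then show "\<exists>(L :: nat set) le one R h. admissible L le one R \<and> bij_betw h S R
    \<and> (\<forall>x\<in>S. \<forall>y\<in>S. h (add x y) = jm_join L le (h x) (h y) \<and> h (mul x y) = compose L (h x) (h y))"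
    by (rule top_left_absorbing.nat_representation)
qed

end
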